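(* Let $\alpha:I\to(0,\infty)$ and $a:I\to\mathbb{R}$ be smooth, and let $v$ be a smooth solution, with values in $I$, of $$v_t+a(v)v_x+\partial_x\big(\alpha(v)\partial_x(\alpha(v)\partial_x v)\big)=0.$$ For every integer $k\geq1$, $v_k:=(\alpha(v)\partial_x)^k v$ satisfies $$\partial_t v_k+a(v)\partial_x v_k+\partial_x\big(\alpha(v)\partial_x(\alpha(v)\partial_x v_k)\big)=f_k\,\partial_x^2 v_k+g_k\,\partial_x v_k+h_k,$$ where: (i) $f_k=(k-1)\alpha'(v)\,v_1=(k-1)\alpha(v)\partial_x(\alpha(v))$; (ii) $g_k=A_k(v)\,v_1^2+B_k(v)\,v_2$ for some continuous functions $A_k,B_k$ on $I$ (built from $\alpha$ and its derivatives), i.e. $g_k$ is of homogeneous weight $2$ in $(v_1,v_2)$; (iii) $h_k$ is a finite sum of terms of the form $\beta(v)\prod_{j=1}^{N}\partial_x^{\gamma_j}v$ with $1\le\gamma_j\le k$ for all $j$, where each $\beta$ is a continuous function on $I$ built from $\alpha$, $a$ and their derivatives, and where the weight $\sum_j\gamma_j$ of each term equals either $k+1$ or $k+3$. (For instance $f_1=g_1=0$, $h_1=-\frac{a'(v)}{\alpha(v)}v_1^2$.)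
   Context: Notation: $\alpha'$ denotes the derivative of the function $\alpha$ with respect to its argument, and $\alpha(v)$, $a(v)$ denote compositions with $v(t,x)$. The weight of a monomial $\beta(v)\prod_j\partial_x^{\gamma_j}v$ is the total number of derivatives $\sum_j\gamma_j$; in terms of the $v_j$, $v_j$ has weight $j$. *)

theory Defs
  imports "HOL-Analysis.Analysis"
begin

definition dx :: "(real \<Rightarrow> real \<Rightarrow> real) \<Rightarrow> real \<Rightarrow> real \<Rightarrow> real" where
  "dx w = (\<lambda>t x. deriv (\<lambda>y. w t y) x)"

definition dt :: "(real \<Rightarrow> real \<Rightarrow> real) \<Rightarrow> real \<Rightarrow> real \<Rightarrow> real" where
  "dt w = (\<lambda>t x. deriv (\<lambda>s. w s x) t)"

fun pd :: "bool list \<Rightarrow> (real \<Rightarrow> real \<Rightarrow> real) \<Rightarrow> real \<Rightarrow> real \<Rightarrow> real" where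
  "pd [] w = w"
| "pd (b # bs) w = (if b then dt (pd bs w) else dx (pd bs w))"

definition smooth_on :: "real set \<Rightarrow> (real \<Rightarrow> real) \<Rightarrow> bool" where
  "smooth_on I f \<longleftrightarrow> (\<forall>n. \<forall>x\<in>I. ((deriv ^^ n) f) field_differentiable (at x))"

definition smooth2_on :: "(real \<times> real) set \<Rightarrow> (real \<Rightarrow> real \<Rightarrow> real) \<Rightarrow> bool" where
  "smooth2_on \<Omega> w \<longleftrightarrow>
     (\<forall>ws. continuous_on \<Omega> (\<lambda>(t, x). pd ws w t x) \<and>
       (\<forall>(t, x)\<in>\<Omega>. (\<lambda>y. pd ws w t y) field_differentiable (at x) \<and>
                     (\<lambda>s. pd ws w s x) field_differentiable (at t)))"

definition Lop :: "(real \<Rightarrow> real) \<Rightarrow> (real \<Rightarrow> real) \<Rightarrow> (real \<Rightarrow> real \<Rightarrow> real)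
                   \<Rightarrow> (real \<Rightarrow> real \<Rightarrow> real) \<Rightarrow> real \<Rightarrow> real \<Rightarrow> real" where
  "Lop \<alpha> a v w = (\<lambda>t x. dt w t x + a (v t x) * dx w t x
      + dx (\<lambda>t x. \<alpha> (v t x) * dx (\<lambda>t x. \<alpha> (v t x) * dx w t x) t x) t x)"

definition vk :: "(real \<Rightarrow> real) \<Rightarrow> (real \<Rightarrow> real \<Rightarrow> real) \<Rightarrow> nat \<Rightarrow> real \<Rightarrow> real \<Rightarrow> real" where
  "vk \<alpha> v k = ((\<lambda>w t x. \<alpha> (v t x) * dx w t x) ^^ k) v"

text \<open>A sum of monomials  beta(v) * prod_j d_x^{gamma_j} v, each given as (beta, [gamma_1,...,gamma_N]).\<close>
definition monsum :: "((real \<Rightarrow> real) \<times> nat list) list \<Rightarrow> (real \<Rightarrow> real \<Rightarrow> real) \<Rightarrow> real \<Rightarrow> real \<Rightarrow> real" where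
  "monsum ts v = (\<lambda>t x. (\<Sum>(\<beta>, gs)\<leftarrow>ts. \<beta> (v t x) * (\<Prod>g\<leftarrow>gs. (dx ^^ g) v t x)))"

end

theory Submission
  imports Defs
begin

text \<open>Write \<open>D w = \<alpha>(v) \<partial>\<^sub>x w\<close>, so that \<open>v\<^sub>k = D\<^sup>k v\<close> and the operator is
  \<open>L w = w\<^sub>t + a(v) w\<^sub>x + \<partial>\<^sub>x D D w\<close>. Using the equation \<open>v\<^sub>t = - a(v) v\<^sub>x - \<partial>\<^sub>x v\<^sub>2\<close> to
  differentiate \<open>\<alpha>(v)\<close> in time, and the symmetry of mixed partial derivatives, one computes the
  commutator of \<open>L\<close> with \<open>D\<close>; applied to \<open>w = v\<^sub>k\<close> it expresses \<open>L v\<^sub>k\<^sub>+\<^sub>1\<close> as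
  \<open>\<alpha>(v) \<partial>\<^sub>x (L v\<^sub>k)\<close> plus explicit terms. Induction on \<open>k\<close> then shows that the coefficient of
  \<open>\<partial>\<^sub>x\<^sup>2 v\<^sub>k\<close> grows by \<open>\<alpha>'(v) v\<^sub>1\<close> at each step, that the coefficient of \<open>\<partial>\<^sub>x v\<^sub>k\<close> stays of the form
  \<open>A(v) v\<^sub>1\<^sup>2 + B(v) v\<^sub>2\<close>, and that the rest stays a sum of monomials in the \<open>\<partial>\<^sub>x\<^sup>j v\<close>
  whose weights are \<open>k + 1\<close> or \<open>k + 3\<close>: differentiating a monomial raises its weight by one, and the
  new terms produced at each step multiply \<open>\<partial>\<^sub>x v\<^sub>k\<close> by factors of weight 1 or 3.

  To justify the differentiations, every function that occurs is shown to agree on the domain with a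
  polynomial in the partial derivatives of \<open>v\<close> whose coefficients are built from \<open>\<alpha>\<close>, \<open>a\<close>
  and their derivatives; such functions are smooth.\<close>

section \<open>Partial derivatives along lines\<close>

definition slice :: "bool \<Rightarrow> (real \<Rightarrow> real \<Rightarrow> real) \<Rightarrow> real \<Rightarrow> real \<Rightarrow> real \<Rightarrow> real" where
  "slice b f t x = (if b then (\<lambda>s. f s x) else f t)"

definition coord :: "bool \<Rightarrow> real \<Rightarrow> real \<Rightarrow> real" where
  "coord b t x = (if b then t else x)"

definition partial :: "bool \<Rightarrow> (real \<Rightarrow> real \<Rightarrow> real) \<Rightarrow> real \<Rightarrow> real \<Rightarrow> real" where
  "partial b = (if b then dt else dx)"

definition slice_set :: "(real \<times> real) set \<Rightarrow> bool \<Rightarrow> real \<Rightarrow> real \<Rightarrow> real set" where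
  "slice_set \<Omega> b t x = (\<lambda>z. if b then (z, x) else (t, z)) -` \<Omega>"

lemma slice_coord [simp]: "slice b f t x (coord b t x) = f t x"
  by (simp add: slice_def coord_def)

lemma partial_eq_deriv_slice: "partial b f t x = deriv (slice b f t x) (coord b t x)"
  by (simp add: partial_def slice_def coord_def dt_def dx_def)

lemma slice_add: "slice b (\<lambda>t x. f t x + g t x) t x = (\<lambda>z. slice b f t x z + slice b g t x z)"
  and slice_mult: "slice b (\<lambda>t x. f t x * g t x) t x = (\<lambda>z. slice b f t x z * slice b g t x z)"
  and slice_comp: "slice b (\<lambda>t x. \<beta> (f t x)) t x = (\<lambda>z. \<beta> (slice b f t x z))"
  by (simp_all add: slice_def)

lemma partial_True [simp]: "partial True = dt" and partial_False [simp]: "partial False = dx"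
  by (simp_all add: partial_def)

lemma pd_Cons_partial: "pd (b # ws) f = partial b (pd ws f)"
  by (simp add: partial_def)

lemma open_slice_set: "open \<Omega> \<Longrightarrow> open (slice_set \<Omega> b t x)"
  unfolding slice_set_def by (cases b) (auto intro!: continuous_open_vimage continuous_intros)

lemma coord_in_slice_set: "(t, x) \<in> \<Omega> \<Longrightarrow> coord b t x \<in> slice_set \<Omega> b t x"
  by (simp add: slice_set_def coord_def)

lemma slice_eq_on_slice_set:
  "(\<And>s y. (s, y) \<in> \<Omega> \<Longrightarrow> f s y = g s y) \<Longrightarrow> z \<in> slice_set \<Omega> b t x \<Longrightarrow>
    slice b f t x z = slice b g t x z"
  by (cases b) (auto simp: slice_set_def slice_def)

lemma partial_cong:
  assumes "open \<Omega>" "\<And>s y. (s, y) \<in> \<Omega> \<Longrightarrow> f s y = g s y" "(t, x) \<in> \<Omega>"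
  shows "partial b f t x = partial b g t x"
  unfolding partial_eq_deriv_slice
proof (rule deriv_cong_ev)
  show "\<forall>\<^sub>F z in nhds (coord b t x). slice b f t x z = slice b g t x z"
    unfolding eventually_nhds
    by (intro exI[of _ "slice_set \<Omega> b t x"] conjI open_slice_set[OF assms(1)]
        coord_in_slice_set[OF assms(3)] ballI slice_eq_on_slice_set[OF assms(2)])
qed simp

lemma dx_cong:
  "open \<Omega> \<Longrightarrow> (\<And>s y. (s, y) \<in> \<Omega> \<Longrightarrow> f s y = g s y) \<Longrightarrow> (t, x) \<in> \<Omega> \<Longrightarrow> dx f t x = dx g t x"
  using partial_cong[of \<Omega> f g t x False] by simp

lemma has_derivative_slice_cong:
  assumes "open \<Omega>" "\<And>s y. (s, y) \<in> \<Omega> \<Longrightarrow> f s y = g s y" "(t, x) \<in> \<Omega>"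
    and "(slice b g t x has_field_derivative D) (at (coord b t x))"
  shows "(slice b f t x has_field_derivative D) (at (coord b t x))"
  by (rule has_field_derivative_transform_within_open[OF assms(4) open_slice_set[OF assms(1)]
      coord_in_slice_set[OF assms(3)]])
     (rule slice_eq_on_slice_set[OF assms(2), symmetric])

lemma smooth2_on_slice_has_derivative:
  assumes "smooth2_on \<Omega> f" "(t, x) \<in> \<Omega>"
  shows "(slice b (pd ws f) t x has_field_derivative pd (b # ws) f t x) (at (coord b t x))"
  using assms unfolding smooth2_on_def
  by (cases b) (auto simp: slice_def coord_def dt_def dx_def DERIV_deriv_iff_field_differentiable[symmetric])

lemma smooth2_on_continuous_on_line:
  assumes "smooth2_on \<Omega> f" "{s} \<times> S \<subseteq> \<Omega>"
  shows "continuous_on S (pd ws f s)"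
  using assms unfolding smooth2_on_def
  by (auto intro!: continuous_on_compose2[of \<Omega> "\<lambda>(t, x). pd ws f t x" S "\<lambda>y. (s, y)", simplified]
      continuous_intros)

lemma smooth2_on_eq_plus_integral_dx:
  assumes f: "smooth2_on \<Omega> f" and line: "{s} \<times> {a..x} \<subseteq> \<Omega>" and "a \<le> x"
  shows "f s x = f s a + integral {a..x} (dx f s)"
proof -
  have "(dx f s has_integral (f s x - f s a)) {a..x}"
  proof (rule fundamental_theorem_of_calculus[OF \<open>a \<le> x\<close>])
    fix y assume "y \<in> {a..x}"
    with line have "(s, y) \<in> \<Omega>" by blast
    then show "(f s has_vector_derivative dx f s y) (at y within {a..x})"
      using smooth2_on_slice_has_derivative[OF f, of s y False "[]"]
      by (auto simp: slice_def coord_def has_real_derivative_iff_has_vector_derivative[symmetric]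
          intro: has_field_derivative_at_within)
  qed
  then show ?thesis by (simp add: integral_unique)
qed

lemma smooth2_on_integral_dx_has_derivative:
  assumes f: "smooth2_on \<Omega> f" and U: "open U" "convex U" "U \<times> {a..x} \<subseteq> \<Omega>" "s \<in> U"
  shows "((\<lambda>s. integral {a..x} (dx f s)) has_field_derivative integral {a..x} (dt (dx f) s)) (at s)"
proof -
  have "((\<lambda>s. integral (cbox a x) (\<lambda>y. dx f s y)) has_field_derivative
          integral (cbox a x) (\<lambda>y. dt (dx f) s y)) (at s within U)"
  proof (rule leibniz_rule_field_derivative)
    fix s' y assume "s' \<in> U" "y \<in> cbox a x"
    with U(3) have "(s', y) \<in> \<Omega>" by auto
    then show "((\<lambda>s. dx f s y) has_field_derivative dt (dx f) s' y) (at s' within U)"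
      using smooth2_on_slice_has_derivative[OF f, of s' y True "[False]"]
      by (auto simp: slice_def coord_def intro: has_field_derivative_at_within)
  next
    fix s' assume "s' \<in> U"
    then show "dx f s' integrable_on cbox a x"
      using smooth2_on_continuous_on_line[OF f, of s' "{a..x}" "[False]"] U(3)
      by (auto intro: integrable_continuous_real)
  next
    have "continuous_on \<Omega> (\<lambda>(s, y). pd [True, False] f s y)"
      using f unfolding smooth2_on_def by blast
    then show "continuous_on (U \<times> cbox a x) (\<lambda>(s, y). dt (dx f) s y)"
      using U(3) by (auto intro: continuous_on_subset)
  qed (use U in auto)
  then show ?thesis using at_within_open[OF U(4,1)] by simp
qed

lemma smooth2_on_dt_eq_plus_integral:
  assumes f: "smooth2_on \<Omega> f" and U: "open U" "convex U" "U \<times> {a..x} \<subseteq> \<Omega>" "s \<in> U"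
    and "a \<le> x"
  shows "dt f s x = dt f s a + integral {a..x} (dt (dx f) s)"
proof -
  have line: "{s'} \<times> {a..x} \<subseteq> \<Omega>" if "s' \<in> U" for s'
    using U(3) that by blast
  have "(s, a) \<in> \<Omega>"
    using line[OF U(4)] \<open>a \<le> x\<close> by auto
  then have "((\<lambda>s. f s a + integral {a..x} (dx f s)) has_field_derivative
          dt f s a + integral {a..x} (dt (dx f) s)) (at s)"
    using smooth2_on_slice_has_derivative[OF f, of s a True "[]"]
      smooth2_on_integral_dx_has_derivative[OF f U]
    by (auto simp: slice_def coord_def intro!: derivative_eq_intros)
  then have "((\<lambda>s. f s x) has_field_derivative dt f s a + integral {a..x} (dt (dx f) s)) (at s)"
    by (rule has_field_derivative_transform_within_open[OF _ U(1,4)])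
       (simp add: smooth2_on_eq_plus_integral_dx[OF f line \<open>a \<le> x\<close>])
  then show ?thesis by (simp add: dt_def DERIV_imp_deriv)
qed

lemma smooth2_on_dt_dx_commute:
  assumes f: "smooth2_on \<Omega> f" and "open \<Omega>" "(t, x) \<in> \<Omega>"
  shows "dt (dx f) t x = dx (dt f) t x"
proof -
  obtain T X where TX: "open T" "open X" "(t, x) \<in> T \<times> X" "T \<times> X \<subseteq> \<Omega>"
    by (rule open_prod_elim[OF assms(2,3)])
  obtain d where d: "d > 0" "ball t d \<subseteq> T"
    using TX(1,3) by (auto elim: openE)
  obtain e where e: "e > 0" "cball x e \<subseteq> X"
    using TX(2,3) open_contains_cball[of X] by auto
  define a b where "a = x - e" and "b = x + e"
  have box: "ball t d \<times> {a..b} \<subseteq> \<Omega>"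
    using TX(4) d(2) e(2) by (auto simp: a_def b_def cball_eq_atLeastAtMost)
  have t: "t \<in> ball t d" using d(1) by simp
  have "{t} \<times> {a..b} \<subseteq> \<Omega>"
    using box t by blast
  then have "continuous_on {a..b} (dt (dx f) t)"
    using smooth2_on_continuous_on_line[OF f, of t "{a..b}" "[True, False]"] by simp
  then have "((\<lambda>y. integral {a..y} (dt (dx f) t)) has_field_derivative dt (dx f) t x) (at x)"
    using e(1) integral_has_real_derivative[of a b "dt (dx f) t" x]
    by (simp add: a_def b_def at_within_Icc_at)
  then have "((\<lambda>y. dt f t a + integral {a..y} (dt (dx f) t)) has_field_derivative dt (dx f) t x) (at x)"
    by (rule DERIV_add[OF DERIV_const, THEN DERIV_cong]) simp
  then have "((\<lambda>y. dt f t y) has_field_derivative dt (dx f) t x) (at x)"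
  proof (rule has_field_derivative_transform_within_open[where S = "{a<..<b}"])
    fix y assume "y \<in> {a<..<b}"
    then have "ball t d \<times> {a..y} \<subseteq> \<Omega>"
      using box by auto
    then show "dt f t a + integral {a..y} (dt (dx f) t) = dt f t y"
      using smooth2_on_dt_eq_plus_integral[OF f open_ball convex_ball _ t] \<open>y \<in> {a<..<b}\<close>
      by simp
  qed (use e(1) in \<open>auto simp: a_def b_def\<close>)
  then show ?thesis by (simp add: dx_def DERIV_imp_deriv)
qed

section \<open>Differential polynomials\<close>

(* A list of terms (\<beta>, [w\<^sub>1, ..., w\<^sub>N]) stands for the sum of the \<beta>(v) * \<Prod>\<^sub>j \<partial>\<^sup>w\<^sup>j v, where a
   derivative w\<^sub>j is either a word in t and x as in pd (bool list) or an order of x-derivative (nat). *)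
type_synonym 'w dpoly = "((real \<Rightarrow> real) \<times> 'w list) list"

definition dpoly_mult :: "'w dpoly \<Rightarrow> 'w dpoly \<Rightarrow> 'w dpoly" where
  "dpoly_mult X Y = concat (map (\<lambda>(\<beta>, ws). map (\<lambda>(\<gamma>, zs). (\<lambda>y. \<beta> y * \<gamma> y, ws @ zs)) Y) X)"

lemma set_dpoly_mult:
  "set (dpoly_mult X Y) = {(\<lambda>y. \<beta> y * \<gamma> y, ws @ zs) | \<beta> ws \<gamma> zs. (\<beta>, ws) \<in> set X \<and> (\<gamma>, zs) \<in> set Y}"
  by (fastforce simp: dpoly_mult_def)

fun leibniz_words :: "bool \<Rightarrow> bool list list \<Rightarrow> bool list list list" where
  "leibniz_words b [] = []"
| "leibniz_words b (w # ws) = ((b # w) # ws) # map (Cons w) (leibniz_words b ws)"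

definition partial_dpoly :: "bool \<Rightarrow> bool list dpoly \<Rightarrow> bool list dpoly" where
  "partial_dpoly b X =
     concat (map (\<lambda>(\<beta>, ws). (deriv \<beta>, [b] # ws) # map (Pair \<beta>) (leibniz_words b ws)) X)"

definition x_words :: "nat dpoly \<Rightarrow> bool list dpoly" where
  "x_words X = map (\<lambda>(\<beta>, gs). (\<beta>, map (\<lambda>g. replicate g False) gs)) X"

fun leibniz_orders :: "nat list \<Rightarrow> nat list list" where
  "leibniz_orders [] = []"
| "leibniz_orders (g # gs) = (Suc g # gs) # map (Cons g) (leibniz_orders gs)"

definition dx_dpoly :: "nat dpoly \<Rightarrow> nat dpoly" where
  "dx_dpoly X = concat (map (\<lambda>(\<beta>, gs). (deriv \<beta>, 1 # gs) # map (Pair \<beta>) (leibniz_orders gs)) X)"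

definition dp_coeff :: "(real \<Rightarrow> real) \<Rightarrow> nat dpoly" where
  "dp_coeff \<beta> = [(\<beta>, [])]"

definition dp_dx :: "nat \<Rightarrow> nat dpoly" where
  "dp_dx g = [(\<lambda>y. 1, [g])]"

lemma pd_replicate_False: "pd (replicate g False) w = (dx ^^ g) w"
  by (induction g) auto

lemma x_words_append: "x_words (X @ Y) = x_words X @ x_words Y"
  by (simp add: x_words_def)

lemma x_words_mult: "x_words (dpoly_mult X Y) = dpoly_mult (x_words X) (x_words Y)"
  by (simp add: x_words_def dpoly_mult_def map_concat o_def case_prod_beta')

lemma x_words_dx_dpoly: "x_words (dx_dpoly X) = partial_dpoly False (x_words X)"
proof -
  have "map (map (\<lambda>g. replicate g False)) (leibniz_orders gs)
      = leibniz_words False (map (\<lambda>g. replicate g False) gs)" for gs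
  proof (induction gs)
    case (Cons g gs)
    have "map (map (\<lambda>g. replicate g False)) (map (Cons g) (leibniz_orders gs))
        = map (Cons (replicate g False)) (map (map (\<lambda>g. replicate g False)) (leibniz_orders gs))"
      by simp
    then show ?case using Cons by simp
  qed simp
  from this[symmetric] show ?thesis
    by (simp add: x_words_def dx_dpoly_def partial_dpoly_def map_concat o_def case_prod_beta')
qed

definition weights :: "nat dpoly \<Rightarrow> nat set" where
  "weights X = (\<lambda>(\<beta>, gs). sum_list gs) ` set X"

definition orders :: "nat dpoly \<Rightarrow> nat set" where
  "orders X = (\<Union>(\<beta>, gs)\<in>set X. set gs)"

lemma weights_append [simp]: "weights (X @ Y) = weights X \<union> weights Y"
  and orders_append [simp]: "orders (X @ Y) = orders X \<union> orders Y"
  by (auto simp: weights_def orders_def)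

lemma weights_mult: "weights (dpoly_mult X Y) = {m + n | m n. m \<in> weights X \<and> n \<in> weights Y}"
  by (force simp: weights_def set_dpoly_mult)

lemma orders_mult: "orders (dpoly_mult X Y) \<subseteq> orders X \<union> orders Y"
  by (force simp: orders_def set_dpoly_mult)

lemma weights_dp_coeff [simp]: "weights (dp_coeff \<beta>) = {0}"
  and orders_dp_coeff [simp]: "orders (dp_coeff \<beta>) = {}"
  by (simp_all add: weights_def orders_def dp_coeff_def)

lemma weights_dx_dpoly: "weights (dx_dpoly X) = Suc ` weights X"
proof -
  have "ys \<in> set (leibniz_orders gs) \<Longrightarrow> sum_list ys = Suc (sum_list gs)" for ys gs
    by (induction gs arbitrary: ys) auto
  then show ?thesis by (force simp: weights_def dx_dpoly_def)
qed

lemma orders_dx_dpoly: "orders X \<subseteq> {1..m} \<Longrightarrow> orders (dx_dpoly X) \<subseteq> {1..Suc m}"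
proof -
  have "ys \<in> set (leibniz_orders gs) \<Longrightarrow> set gs \<subseteq> {1..m} \<Longrightarrow> set ys \<subseteq> {1..Suc m}" for ys gs
    by (induction gs arbitrary: ys) (auto simp: subset_iff le_SucI)
  then show "orders X \<subseteq> {1..m} \<Longrightarrow> orders (dx_dpoly X) \<subseteq> {1..Suc m}"
    by (fastforce simp: orders_def dx_dpoly_def)
qed

fun vk_dpoly :: "(real \<Rightarrow> real) \<Rightarrow> nat \<Rightarrow> nat dpoly" where
  "vk_dpoly \<alpha> 0 = [(\<lambda>y. y, [])]"
| "vk_dpoly \<alpha> (Suc j) = dpoly_mult (dp_coeff \<alpha>) (dx_dpoly (vk_dpoly \<alpha> j))"

lemma weights_vk_dpoly: "weights (vk_dpoly \<alpha> j) = {j}"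
proof (induction j)
  case (Suc j)
  then show ?case by (simp add: weights_mult weights_dx_dpoly)
qed (simp add: weights_def)

lemma orders_vk_dpoly: "orders (vk_dpoly \<alpha> j) \<subseteq> {1..j}"
proof (induction j)
  case (Suc j)
  then show ?case
    using orders_mult[of "dp_coeff \<alpha>"] orders_dx_dpoly[OF Suc] by auto
qed (simp add: orders_def)

lemma vk_Suc: "vk \<alpha> v (Suc k) = (\<lambda>t x. \<alpha> (v t x) * dx (vk \<alpha> v k) t x)"
  by (simp add: vk_def)

section \<open>Admissible coefficients\<close>

locale pde_coefficients =
  fixes I :: "real set" and \<alpha> a :: "real \<Rightarrow> real"
  assumes open_I: "open I" and smooth_\<alpha>: "smooth_on I \<alpha>" and smooth_a: "smooth_on I a"
    and \<alpha>_pos: "\<forall>y\<in>I. \<alpha> y > 0"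
begin

(* The coefficients "built from \<alpha>, a and their derivatives". Rule eq_on makes the class depend
   only on values on the open set I, which is what closure under deriv needs. *)
inductive admissible :: "(real \<Rightarrow> real) \<Rightarrow> bool" where
  const: "admissible (\<lambda>y. c)"
| ident: "admissible (\<lambda>y. y)"
| deriv_\<alpha>: "admissible ((deriv ^^ j) \<alpha>)"
| deriv_a: "admissible ((deriv ^^ j) a)"
| inverse_\<alpha>: "admissible (\<lambda>y. inverse (\<alpha> y))"
| add: "admissible f \<Longrightarrow> admissible g \<Longrightarrow> admissible (\<lambda>y. f y + g y)"
| mult: "admissible f \<Longrightarrow> admissible g \<Longrightarrow> admissible (\<lambda>y. f y * g y)"
| eq_on: "admissible f \<Longrightarrow> \<forall>y\<in>I. f y = g y \<Longrightarrow> admissible g"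

lemma admissible_derivative:
  assumes "admissible f"
  shows "admissible (deriv f) \<and> (\<forall>y\<in>I. (f has_field_derivative deriv f y) (at y))"
  using assms
proof induction
  have by_derivative: "admissible (deriv g) \<and> (\<forall>y\<in>I. (g has_field_derivative deriv g y) (at y))"
    if "\<And>y. y \<in> I \<Longrightarrow> (g has_field_derivative D y) (at y)" "admissible D" for g D
    using that DERIV_imp_deriv by (metis admissible.eq_on)
  have smooth: "((deriv ^^ j) h has_field_derivative (deriv ^^ Suc j) h y) (at y)"
    if "smooth_on I h" "y \<in> I" for h j y
    using that unfolding smooth_on_def by (simp add: DERIV_deriv_iff_field_differentiable)
  {
    case (const c)
    show ?case by (rule by_derivative[of _ "\<lambda>y. 0"]) (auto intro: admissible.const)
  next
    case ident
    show ?case by (rule by_derivative[of _ "\<lambda>y. 1"]) (auto intro: admissible.const)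
  next
    case (deriv_\<alpha> j)
    show ?case by (rule by_derivative[OF smooth[OF smooth_\<alpha>] admissible.deriv_\<alpha>])
  next
    case (deriv_a j)
    show ?case by (rule by_derivative[OF smooth[OF smooth_a] admissible.deriv_a])
  next
    case inverse_\<alpha>
    show ?case
    proof (rule by_derivative)
      fix y assume "y \<in> I"
      then show "((\<lambda>y. inverse (\<alpha> y)) has_field_derivative
          (-1) * ((deriv ^^ 1) \<alpha> y * (inverse (\<alpha> y) * inverse (\<alpha> y)))) (at y)"
        using DERIV_inverse_fun[OF smooth[OF smooth_\<alpha>, of y 0]] \<alpha>_pos
        by (auto simp: power2_eq_square)
    qed (intro admissible.mult admissible.const admissible.deriv_\<alpha> admissible.inverse_\<alpha>)
  next
    case (add f g)
    then show ?case
      by (intro by_derivative[of _ "\<lambda>y. deriv f y + deriv g y"])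
         (auto intro!: derivative_eq_intros admissible.add)
  next
    case (mult f g)
    then show ?case
      by (intro by_derivative[of _ "\<lambda>y. deriv f y * g y + f y * deriv g y"])
         (auto intro!: derivative_eq_intros admissible.add admissible.mult)
  next
    case (eq_on f g)
    have "(g has_field_derivative deriv f y) (at y)" if "y \<in> I" for y
      using eq_on that open_I by (auto intro: has_field_derivative_transform_within_open)
    then show ?case using eq_on by (intro by_derivative[of g "deriv f"]) auto
  }
qed

lemma admissible_deriv: "admissible f \<Longrightarrow> admissible (deriv f)"
  using admissible_derivative by blast

lemma admissible_has_derivative:
  "admissible f \<Longrightarrow> y \<in> I \<Longrightarrow> (f has_field_derivative deriv f y) (at y)"
  using admissible_derivative by blast

lemma admissible_continuous_on: "admissible f \<Longrightarrow> continuous_on I f"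
  using admissible_has_derivative DERIV_isCont continuous_at_imp_continuous_on by blast

lemma admissible_uminus: "admissible f \<Longrightarrow> admissible (\<lambda>y. - f y)"
  using admissible.mult[OF admissible.const[of "-1"]] by (simp add: admissible.eq_on)

lemma admissible_\<alpha>: "admissible \<alpha>"
  and admissible_deriv_\<alpha>: "admissible (deriv \<alpha>)"
  and admissible_deriv2_\<alpha>: "admissible (deriv (deriv \<alpha>))"
  and admissible_a: "admissible a"
  and admissible_deriv_a: "admissible (deriv a)"
  using admissible.deriv_\<alpha>[of 0] admissible.deriv_\<alpha>[of 1] admissible.deriv_\<alpha>[of 2]
    admissible.deriv_a[of 0] admissible.deriv_a[of 1]
  by (simp_all add: numeral_2_eq_2)

definition admissible_dpoly :: "'w dpoly \<Rightarrow> bool" where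
  "admissible_dpoly X \<longleftrightarrow> (\<forall>(\<beta>, ws)\<in>set X. admissible \<beta>)"

lemma admissible_dpoly_append [simp]:
  "admissible_dpoly (X @ Y) \<longleftrightarrow> admissible_dpoly X \<and> admissible_dpoly Y"
  by (auto simp: admissible_dpoly_def)

lemma admissible_dpoly_appendI:
  "admissible_dpoly X \<Longrightarrow> admissible_dpoly Y \<Longrightarrow> admissible_dpoly (X @ Y)"
  by simp

lemma admissible_dpoly_mult:
  "admissible_dpoly X \<Longrightarrow> admissible_dpoly Y \<Longrightarrow> admissible_dpoly (dpoly_mult X Y)"
  by (auto simp: admissible_dpoly_def set_dpoly_mult intro!: admissible.mult)

lemma admissible_dpoly_partial:
  "admissible_dpoly X \<Longrightarrow> admissible_dpoly (partial_dpoly b X)"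
  by (auto simp: admissible_dpoly_def partial_dpoly_def admissible_deriv)

lemma admissible_dpoly_dx_dpoly: "admissible_dpoly X \<Longrightarrow> admissible_dpoly (dx_dpoly X)"
  by (auto simp: admissible_dpoly_def dx_dpoly_def admissible_deriv)

lemma admissible_dpoly_dp_coeff: "admissible \<beta> \<Longrightarrow> admissible_dpoly (dp_coeff \<beta>)"
  and admissible_dpoly_dp_dx: "admissible_dpoly (dp_dx g)"
  by (simp_all add: admissible_dpoly_def dp_coeff_def dp_dx_def admissible.const)

lemma admissible_dpoly_vk_dpoly: "admissible_dpoly (vk_dpoly \<alpha> j)"
proof (induction j)
  case 0
  then show ?case by (simp add: admissible_dpoly_def admissible.ident)
next
  case (Suc j)
  then show ?case
    by (simp add: admissible_dpoly_mult admissible_dpoly_dx_dpoly admissible_dpoly_dp_coeff admissible_\<alpha>)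
qed

definition next_A :: "real \<Rightarrow> (real \<Rightarrow> real) \<Rightarrow> real \<Rightarrow> real" where
  "next_A c A = (\<lambda>y. A y + (c * (deriv (deriv \<alpha>) y * \<alpha> y) + (1 - 2 * c) * (deriv \<alpha> y * deriv \<alpha> y))
                          * (inverse (\<alpha> y) * inverse (\<alpha> y)))"

definition next_B :: "real \<Rightarrow> (real \<Rightarrow> real) \<Rightarrow> real \<Rightarrow> real" where
  "next_B c B = (\<lambda>y. B y + c * (deriv \<alpha> y * inverse (\<alpha> y)))"

lemma admissible_next_A: "admissible A \<Longrightarrow> admissible (next_A c A)"
  unfolding next_A_def
  by (intro admissible.add admissible.mult admissible.const admissible.inverse_\<alpha> admissible_\<alpha>
      admissible_deriv_\<alpha> admissible_deriv2_\<alpha>)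

lemma admissible_next_B: "admissible B \<Longrightarrow> admissible (next_B c B)"
  unfolding next_B_def
  by (intro admissible.add admissible.mult admissible.const admissible.inverse_\<alpha> admissible_deriv_\<alpha>)

definition remainder_dpoly_1 :: "nat dpoly" where
  "remainder_dpoly_1 = [(\<lambda>y. - (deriv a y * \<alpha> y), [1])]"

definition remainder_dpoly_3 :: "real \<Rightarrow> (real \<Rightarrow> real) \<Rightarrow> (real \<Rightarrow> real) \<Rightarrow> nat dpoly" where
  "remainder_dpoly_3 c A B =
     dpoly_mult (dp_coeff \<alpha>)
       (dpoly_mult (dp_coeff (deriv A)) (dpoly_mult (dp_dx 1) (dpoly_mult (vk_dpoly \<alpha> 1) (vk_dpoly \<alpha> 1)))
        @ dpoly_mult (dp_coeff (\<lambda>y. 2 * A y)) (dpoly_mult (vk_dpoly \<alpha> 1) (dx_dpoly (vk_dpoly \<alpha> 1)))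
        @ dpoly_mult (dp_coeff (deriv B)) (dpoly_mult (dp_dx 1) (vk_dpoly \<alpha> 2))
        @ dpoly_mult (dp_coeff B) (dx_dpoly (vk_dpoly \<alpha> 2)))
     @ dpoly_mult (dp_coeff (\<lambda>y. - deriv \<alpha> y)) (dx_dpoly (vk_dpoly \<alpha> 2))
     @ dpoly_mult (dp_coeff (\<lambda>y. deriv \<alpha> y * deriv \<alpha> y * deriv \<alpha> y))
         (dpoly_mult (dp_dx 1) (dpoly_mult (dp_dx 1) (dp_dx 1)))
     @ dpoly_mult (dp_coeff (\<lambda>y. - (c * \<alpha> y * deriv \<alpha> y)))
         (dpoly_mult (dp_dx 1) (dpoly_mult (dp_coeff (deriv (deriv \<alpha>))) (dpoly_mult (dp_dx 1) (dp_dx 1))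
                                @ dpoly_mult (dp_coeff (deriv \<alpha>)) (dp_dx 2)))
     @ dpoly_mult (dp_coeff (\<lambda>y. - deriv \<alpha> y))
         (dpoly_mult (dpoly_mult (dp_coeff (next_A c A)) (dpoly_mult (vk_dpoly \<alpha> 1) (vk_dpoly \<alpha> 1))
                      @ dpoly_mult (dp_coeff (next_B c B)) (vk_dpoly \<alpha> 2))
           (dp_dx 1))"

lemma weights_remainder_dpoly_1: "weights remainder_dpoly_1 = {1}"
  and orders_remainder_dpoly_1: "orders remainder_dpoly_1 = {1}"
  by (simp_all add: remainder_dpoly_1_def weights_def orders_def)

lemma weights_remainder_dpoly_3: "weights (remainder_dpoly_3 c A B) = {3}"
  by (simp add: remainder_dpoly_3_def weights_def dpoly_mult_def dp_coeff_def dp_dx_def dx_dpoly_def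
      numeral_2_eq_2)

lemma orders_remainder_dpoly_3: "orders (remainder_dpoly_3 c A B) \<subseteq> {1..3}"
  by (simp add: remainder_dpoly_3_def orders_def dpoly_mult_def dp_coeff_def dp_dx_def dx_dpoly_def
      numeral_2_eq_2)

lemma admissible_dpoly_remainder_dpoly_1: "admissible_dpoly remainder_dpoly_1"
  by (simp add: remainder_dpoly_1_def admissible_dpoly_def admissible_uminus admissible.mult
      admissible_deriv_a admissible_\<alpha>)

lemma admissible_dpoly_remainder_dpoly_3:
  "admissible A \<Longrightarrow> admissible B \<Longrightarrow> admissible_dpoly (remainder_dpoly_3 c A B)"
  unfolding remainder_dpoly_3_def
  by (intro admissible_dpoly_appendI admissible_dpoly_mult admissible_dpoly_dx_dpoly
      admissible_dpoly_dp_coeff admissible_dpoly_dp_dx admissible_dpoly_vk_dpoly admissible_next_A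
      admissible_next_B admissible_\<alpha> admissible_deriv admissible_uminus admissible.mult
      admissible.const)

definition h1_dpoly :: "nat dpoly" where
  "h1_dpoly = [(\<lambda>y. - (deriv a y * \<alpha> y), [1, 1])]"

definition h2_dpoly :: "nat dpoly" where
  "h2_dpoly = dpoly_mult (dp_coeff \<alpha>) (dx_dpoly h1_dpoly)
                  @ dpoly_mult remainder_dpoly_1 (dx_dpoly (vk_dpoly \<alpha> 1))"

definition next_h_dpoly :: "real \<Rightarrow> (real \<Rightarrow> real) \<Rightarrow> (real \<Rightarrow> real) \<Rightarrow> nat dpoly \<Rightarrow> nat \<Rightarrow> nat dpoly" where
  "next_h_dpoly c A B T k = dpoly_mult (dp_coeff \<alpha>) (dx_dpoly T)
     @ dpoly_mult (remainder_dpoly_1 @ remainder_dpoly_3 c A B) (dx_dpoly (vk_dpoly \<alpha> k))"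

lemma admissible_dpoly_h1_dpoly: "admissible_dpoly h1_dpoly"
  by (simp add: h1_dpoly_def admissible_dpoly_def admissible_uminus admissible.mult
      admissible_deriv_a admissible_\<alpha>)

lemma admissible_dpoly_h2_dpoly: "admissible_dpoly h2_dpoly"
  unfolding h2_dpoly_def
  by (intro admissible_dpoly_appendI admissible_dpoly_mult admissible_dpoly_dx_dpoly
      admissible_dpoly_dp_coeff admissible_\<alpha> admissible_dpoly_h1_dpoly admissible_dpoly_vk_dpoly
      admissible_dpoly_remainder_dpoly_1)

lemma weights_h2_dpoly: "weights h2_dpoly \<subseteq> {3, 5}"
  and orders_h2_dpoly: "orders h2_dpoly \<subseteq> {1..2}"
  by (simp_all add: h2_dpoly_def h1_dpoly_def remainder_dpoly_1_def weights_def orders_def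
      dpoly_mult_def dp_coeff_def dx_dpoly_def)

lemma admissible_dpoly_next_h_dpoly:
  "admissible A \<Longrightarrow> admissible B \<Longrightarrow> admissible_dpoly T \<Longrightarrow> admissible_dpoly (next_h_dpoly c A B T k)"
  unfolding next_h_dpoly_def
  by (intro admissible_dpoly_appendI admissible_dpoly_mult admissible_dpoly_dx_dpoly
      admissible_dpoly_dp_coeff admissible_\<alpha> admissible_dpoly_remainder_dpoly_1
      admissible_dpoly_remainder_dpoly_3 admissible_dpoly_vk_dpoly)

lemma weights_next_h_dpoly:
  "weights T \<subseteq> {k + 1, k + 3} \<Longrightarrow> weights (next_h_dpoly c A B T k) \<subseteq> {Suc k + 1, Suc k + 3}"
  by (auto simp: next_h_dpoly_def weights_mult weights_dx_dpoly weights_vk_dpoly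
      weights_remainder_dpoly_1 weights_remainder_dpoly_3)

lemma orders_next_h_dpoly:
  assumes "2 \<le> k" "orders T \<subseteq> {1..k}"
  shows "orders (next_h_dpoly c A B T k) \<subseteq> {1..Suc k}"
proof -
  have "orders (remainder_dpoly_1 @ remainder_dpoly_3 c A B) \<subseteq> {1..Suc k}"
    using assms(1) orders_remainder_dpoly_3[of c A B] by (auto simp: orders_remainder_dpoly_1)
  then show ?thesis
    using orders_mult orders_dx_dpoly[OF assms(2)] orders_dx_dpoly[OF orders_vk_dpoly]
    unfolding next_h_dpoly_def by (fastforce simp: orders_append)
qed

end

section \<open>Calculus for differential polynomials in a smooth field\<close>

locale smooth_field = pde_coefficients +
  fixes \<Omega> :: "(real \<times> real) set" and v :: "real \<Rightarrow> real \<Rightarrow> real"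
  assumes open_\<Omega>: "open \<Omega>" and smooth_v: "smooth2_on \<Omega> v" and v_in_I: "\<forall>(t, x)\<in>\<Omega>. v t x \<in> I"
begin

definition eval_dpoly :: "bool list dpoly \<Rightarrow> real \<Rightarrow> real \<Rightarrow> real" where
  "eval_dpoly X t x = (\<Sum>(\<beta>, ws)\<leftarrow>X. \<beta> (v t x) * (\<Prod>w\<leftarrow>ws. pd w v t x))"

lemma eval_dpoly_Nil [simp]: "eval_dpoly [] t x = 0"
  and eval_dpoly_Cons: "eval_dpoly ((\<beta>, ws) # X) t x = \<beta> (v t x) * (\<Prod>w\<leftarrow>ws. pd w v t x) + eval_dpoly X t x"
  and eval_dpoly_append: "eval_dpoly (X @ Y) t x = eval_dpoly X t x + eval_dpoly Y t x"
  by (simp_all add: eval_dpoly_def)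

lemma eval_dpoly_mult: "eval_dpoly (dpoly_mult X Y) t x = eval_dpoly X t x * eval_dpoly Y t x"
proof (induction X)
  case Nil
  then show ?case by (simp add: dpoly_mult_def)
next
  case (Cons p X)
  obtain \<beta> ws where p: "p = (\<beta>, ws)" by force
  have "eval_dpoly (map (\<lambda>(\<gamma>, zs). (\<lambda>y. \<beta> y * \<gamma> y, ws @ zs)) Y) t x
      = \<beta> (v t x) * (\<Prod>w\<leftarrow>ws. pd w v t x) * eval_dpoly Y t x"
    by (induction Y) (auto simp: eval_dpoly_def algebra_simps)
  then show ?case
    using Cons by (simp add: dpoly_mult_def p eval_dpoly_append eval_dpoly_Cons algebra_simps)
qed

lemma slice_eval_dpoly:
  "slice b (eval_dpoly X) t x = (\<lambda>z. \<Sum>(\<beta>, ws)\<leftarrow>X. \<beta> (slice b v t x z) * (\<Prod>w\<leftarrow>ws. slice b (pd w v) t x z))"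
  by (cases b) (auto simp: slice_def eval_dpoly_def fun_eq_iff)

lemma prod_words_has_derivative:
  assumes "(t, x) \<in> \<Omega>"
  shows "((\<lambda>z. \<Prod>w\<leftarrow>ws. slice b (pd w v) t x z) has_field_derivative
           (\<Sum>ys\<leftarrow>leibniz_words b ws. \<Prod>w\<leftarrow>ys. pd w v t x)) (at (coord b t x))"
proof (induction ws)
  case (Cons w ws)
  show ?case
    using DERIV_mult'[OF smooth2_on_slice_has_derivative[OF smooth_v assms] Cons]
    by (simp add: o_def sum_list_const_mult algebra_simps)
qed simp

lemma comp_has_derivative:
  assumes "(t, x) \<in> \<Omega>" "admissible \<beta>"
  shows "((\<lambda>z. \<beta> (slice b v t x z)) has_field_derivative deriv \<beta> (v t x) * partial b v t x)
           (at (coord b t x))"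
proof -
  have "(\<beta> has_field_derivative deriv \<beta> (v t x)) (at (slice b v t x (coord b t x)))"
    using admissible_has_derivative[OF assms(2)] v_in_I assms(1) by auto
  moreover have "(slice b v t x has_field_derivative partial b v t x) (at (coord b t x))"
    using smooth2_on_slice_has_derivative[OF smooth_v assms(1), of b "[]"]
    by (cases b) simp_all
  ultimately show ?thesis by (rule DERIV_chain2)
qed

lemma eval_dpoly_has_derivative:
  assumes "(t, x) \<in> \<Omega>" "admissible_dpoly X"
  shows "(slice b (eval_dpoly X) t x has_field_derivative eval_dpoly (partial_dpoly b X) t x) (at (coord b t x))"
  using assms(2)
proof (induction X)
  case Nil
  then show ?case by (simp add: slice_def partial_dpoly_def)
next
  case (Cons p X)
  obtain \<beta> ws where p: "p = (\<beta>, ws)" by force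
  have adm: "admissible \<beta>" "admissible_dpoly X"
    using Cons.prems by (auto simp: admissible_dpoly_def p)
  have IH: "((\<lambda>z. \<Sum>(\<beta>, ws)\<leftarrow>X. \<beta> (slice b v t x z) * (\<Prod>w\<leftarrow>ws. slice b (pd w v) t x z))
      has_field_derivative eval_dpoly (partial_dpoly b X) t x) (at (coord b t x))"
    using Cons.IH[OF adm(2)] by (simp only: slice_eval_dpoly)
  have "((\<lambda>z. \<beta> (slice b v t x z) * (\<Prod>w\<leftarrow>ws. slice b (pd w v) t x z)) has_field_derivative
      deriv \<beta> (v t x) * partial b v t x * (\<Prod>w\<leftarrow>ws. pd w v t x)
      + \<beta> (v t x) * (\<Sum>ys\<leftarrow>leibniz_words b ws. \<Prod>w\<leftarrow>ys. pd w v t x)) (at (coord b t x))"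
    using DERIV_mult'[OF comp_has_derivative[OF assms(1) adm(1)] prod_words_has_derivative[OF assms(1)]]
    by (simp add: algebra_simps)
  from DERIV_add[OF this IH]
  have "(slice b (eval_dpoly ((\<beta>, ws) # X)) t x has_field_derivative
      deriv \<beta> (v t x) * partial b v t x * (\<Prod>w\<leftarrow>ws. pd w v t x)
      + \<beta> (v t x) * (\<Sum>ys\<leftarrow>leibniz_words b ws. \<Prod>w\<leftarrow>ys. pd w v t x)
      + eval_dpoly (partial_dpoly b X) t x) (at (coord b t x))"
    by (simp only: slice_eval_dpoly list.map(2) sum_list.Cons prod.case)
  moreover have "eval_dpoly (map (Pair \<beta>) (leibniz_words b ws)) t x
      = \<beta> (v t x) * (\<Sum>ys\<leftarrow>leibniz_words b ws. \<Prod>w\<leftarrow>ys. pd w v t x)"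
    by (induction "leibniz_words b ws") (auto simp: eval_dpoly_def sum_list_const_mult o_def)
  then have "eval_dpoly (partial_dpoly b ((\<beta>, ws) # X)) t x =
      deriv \<beta> (v t x) * partial b v t x * (\<Prod>w\<leftarrow>ws. pd w v t x)
      + \<beta> (v t x) * (\<Sum>ys\<leftarrow>leibniz_words b ws. \<Prod>w\<leftarrow>ys. pd w v t x)
      + eval_dpoly (partial_dpoly b X) t x"
    by (simp add: partial_dpoly_def eval_dpoly_append eval_dpoly_Cons pd_Cons_partial algebra_simps
        del: pd.simps(2))
  ultimately show ?case by (simp only: p)
qed

lemma eval_dpoly_continuous_on:
  assumes "admissible_dpoly X"
  shows "continuous_on \<Omega> (\<lambda>(t, x). eval_dpoly X t x)"
proof -
  have pd: "continuous_on \<Omega> (\<lambda>(t, x). pd w v t x)" for w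
    using smooth_v by (simp add: smooth2_on_def)
  have "continuous_on \<Omega> (\<lambda>(t, x). \<beta> (v t x))" if "admissible \<beta>" for \<beta>
    using continuous_on_compose2[OF admissible_continuous_on[OF that] pd[of "[]"]] v_in_I
    by (auto simp: case_prod_beta')
  moreover have "continuous_on \<Omega> (\<lambda>(t, x). \<Prod>w\<leftarrow>ws. pd w v t x)" for ws
    by (induction ws) (auto simp: case_prod_beta' intro!: continuous_intros pd[unfolded case_prod_beta'])
  ultimately show ?thesis
    using assms
    by (induction X) (auto simp: admissible_dpoly_def eval_dpoly_def case_prod_beta' intro!: continuous_intros)
qed

definition dpoly_fun :: "(real \<Rightarrow> real \<Rightarrow> real) \<Rightarrow> bool" where
  "dpoly_fun f \<longleftrightarrow> (\<exists>X. admissible_dpoly X \<and> (\<forall>t x. (t, x) \<in> \<Omega> \<longrightarrow> f t x = eval_dpoly X t x))"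

lemma dpoly_funE:
  assumes "dpoly_fun f"
  obtains X where "admissible_dpoly X" "\<And>t x. (t, x) \<in> \<Omega> \<Longrightarrow> f t x = eval_dpoly X t x"
  using assms by (auto simp: dpoly_fun_def)

lemma dpoly_fun_cong:
  "dpoly_fun f \<Longrightarrow> (\<And>t x. (t, x) \<in> \<Omega> \<Longrightarrow> f t x = g t x) \<Longrightarrow> dpoly_fun g"
  by (auto simp: dpoly_fun_def)

lemma dpoly_fun_has_derivative:
  assumes "dpoly_fun f" "(t, x) \<in> \<Omega>"
  shows "(slice b f t x has_field_derivative partial b f t x) (at (coord b t x))"
proof -
  obtain X where X: "admissible_dpoly X" "\<And>t x. (t, x) \<in> \<Omega> \<Longrightarrow> f t x = eval_dpoly X t x"
    using dpoly_funE[OF assms(1)] by blast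
  have "(slice b f t x has_field_derivative eval_dpoly (partial_dpoly b X) t x) (at (coord b t x))"
    by (rule has_derivative_slice_cong[OF open_\<Omega> X(2) assms(2) eval_dpoly_has_derivative[OF assms(2) X(1)]])
  then show ?thesis by (simp add: partial_eq_deriv_slice DERIV_imp_deriv)
qed

lemma dpoly_fun_partial: "dpoly_fun f \<Longrightarrow> dpoly_fun (partial b f)"
proof -
  assume "dpoly_fun f"
  then obtain X where X: "admissible_dpoly X" "\<And>t x. (t, x) \<in> \<Omega> \<Longrightarrow> f t x = eval_dpoly X t x"
    using dpoly_funE by blast
  have "partial b f t x = eval_dpoly (partial_dpoly b X) t x" if "(t, x) \<in> \<Omega>" for t x
    using has_derivative_slice_cong[OF open_\<Omega> X(2) that eval_dpoly_has_derivative[OF that X(1)]]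
    by (simp add: partial_eq_deriv_slice DERIV_imp_deriv)
  then show ?thesis
    using admissible_dpoly_partial[OF X(1)] by (auto simp: dpoly_fun_def)
qed

lemma dpoly_fun_dx: "dpoly_fun f \<Longrightarrow> dpoly_fun (dx f)"
  and dpoly_fun_dt: "dpoly_fun f \<Longrightarrow> dpoly_fun (dt f)"
  using dpoly_fun_partial[of f False] dpoly_fun_partial[of f True] by simp_all

lemma dpoly_fun_add:
  assumes "dpoly_fun f" "dpoly_fun g"
  shows "dpoly_fun (\<lambda>t x. f t x + g t x)"
proof -
  obtain X where "admissible_dpoly X" "\<And>t x. (t, x) \<in> \<Omega> \<Longrightarrow> f t x = eval_dpoly X t x"
    using dpoly_funE[OF assms(1)] by blast
  moreover obtain Y where "admissible_dpoly Y" "\<And>t x. (t, x) \<in> \<Omega> \<Longrightarrow> g t x = eval_dpoly Y t x"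
    using dpoly_funE[OF assms(2)] by blast
  ultimately show ?thesis by (auto simp: dpoly_fun_def eval_dpoly_append intro!: exI[of _ "X @ Y"])
qed

lemma dpoly_fun_mult:
  assumes "dpoly_fun f" "dpoly_fun g"
  shows "dpoly_fun (\<lambda>t x. f t x * g t x)"
proof -
  obtain X where "admissible_dpoly X" "\<And>t x. (t, x) \<in> \<Omega> \<Longrightarrow> f t x = eval_dpoly X t x"
    using dpoly_funE[OF assms(1)] by blast
  moreover obtain Y where "admissible_dpoly Y" "\<And>t x. (t, x) \<in> \<Omega> \<Longrightarrow> g t x = eval_dpoly Y t x"
    using dpoly_funE[OF assms(2)] by blast
  ultimately show ?thesis
    by (auto simp: dpoly_fun_def eval_dpoly_mult admissible_dpoly_mult intro!: exI[of _ "dpoly_mult X Y"])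
qed

lemma dpoly_fun_comp: "admissible \<beta> \<Longrightarrow> dpoly_fun (\<lambda>t x. \<beta> (v t x))"
  by (auto simp: dpoly_fun_def eval_dpoly_def admissible_dpoly_def intro!: exI[of _ "[(\<beta>, [])]"])

lemma dpoly_fun_const: "dpoly_fun (\<lambda>t x. c)"
  and dpoly_fun_v: "dpoly_fun v"
  using dpoly_fun_comp[OF admissible.const[of c]] dpoly_fun_comp[OF admissible.ident] by simp_all

lemma dpoly_fun_smooth2_on:
  assumes "dpoly_fun f"
  shows "smooth2_on \<Omega> f"
proof -
  have pd: "dpoly_fun (pd ws f)" for ws
    using assms by (induction ws) (auto simp: pd_Cons_partial dpoly_fun_partial simp del: pd.simps(2))
  have "continuous_on \<Omega> (\<lambda>(t, x). pd ws f t x)" for ws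
  proof -
    obtain X where X: "admissible_dpoly X" "\<And>t x. (t, x) \<in> \<Omega> \<Longrightarrow> pd ws f t x = eval_dpoly X t x"
      using dpoly_funE[OF pd] by blast
    show ?thesis by (rule continuous_on_eq[OF eval_dpoly_continuous_on[OF X(1)]]) (use X(2) in auto)
  qed
  moreover have "(\<lambda>y. pd ws f t y) field_differentiable (at x) \<and>
      (\<lambda>s. pd ws f s x) field_differentiable (at t)" if "(t, x) \<in> \<Omega>" for ws t x
    using dpoly_fun_has_derivative[OF pd that, of False] dpoly_fun_has_derivative[OF pd that, of True]
    by (auto simp: slice_def coord_def field_differentiable_def)
  ultimately show ?thesis by (auto simp: smooth2_on_def)
qed

lemma partial_add:
  assumes "dpoly_fun f" "dpoly_fun g" "(t, x) \<in> \<Omega>"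
  shows "partial b (\<lambda>t x. f t x + g t x) t x = partial b f t x + partial b g t x"
  using DERIV_add[OF dpoly_fun_has_derivative[OF assms(1,3)] dpoly_fun_has_derivative[OF assms(2,3)]]
  by (simp add: partial_eq_deriv_slice[of b "\<lambda>t x. f t x + g t x"] slice_add DERIV_imp_deriv)

lemma partial_mult:
  assumes "dpoly_fun f" "dpoly_fun g" "(t, x) \<in> \<Omega>"
  shows "partial b (\<lambda>t x. f t x * g t x) t x = partial b f t x * g t x + f t x * partial b g t x"
proof -
  have "((\<lambda>z. slice b f t x z * slice b g t x z) has_field_derivative
      partial b f t x * g t x + f t x * partial b g t x) (at (coord b t x))"
    by (rule DERIV_mult[OF dpoly_fun_has_derivative[OF assms(1,3)]
          dpoly_fun_has_derivative[OF assms(2,3)], THEN DERIV_cong]) simp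
  then show ?thesis
    by (simp add: partial_eq_deriv_slice[of b "\<lambda>t x. f t x * g t x"] slice_mult DERIV_imp_deriv)
qed

lemma partial_comp:
  assumes "admissible \<beta>" "(t, x) \<in> \<Omega>"
  shows "partial b (\<lambda>t x. \<beta> (v t x)) t x = deriv \<beta> (v t x) * partial b v t x"
  using comp_has_derivative[OF assms(2,1)]
  by (simp add: partial_eq_deriv_slice[of b "\<lambda>t x. \<beta> (v t x)"] slice_comp DERIV_imp_deriv)

lemmas dx_add = partial_add[of _ _ _ _ False, simplified]
lemmas dx_mult = partial_mult[of _ _ _ _ False, simplified]
lemmas dx_comp = partial_comp[of _ _ _ False, simplified]
lemmas dt_mult = partial_mult[of _ _ _ _ True, simplified]
lemmas dt_comp = partial_comp[of _ _ _ True, simplified]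

lemma dx_const: "dx (\<lambda>t x. c) t x = 0"
  by (simp add: dx_def)

lemma admissible_dpoly_x_words: "admissible_dpoly X \<Longrightarrow> admissible_dpoly (x_words X)"
  by (auto simp: admissible_dpoly_def x_words_def)

lemma monsum_eq_eval_dpoly: "monsum X v t x = eval_dpoly (x_words X) t x"
  by (simp add: monsum_def eval_dpoly_def x_words_def pd_replicate_False o_def case_prod_beta')

lemma monsum_append: "monsum (X @ Y) v t x = monsum X v t x + monsum Y v t x"
  and monsum_mult: "monsum (dpoly_mult X Y) v t x = monsum X v t x * monsum Y v t x"
  by (simp_all add: monsum_eq_eval_dpoly x_words_append eval_dpoly_append x_words_mult eval_dpoly_mult)

lemma monsum_dp_coeff: "monsum (dp_coeff \<beta>) v t x = \<beta> (v t x)"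
  and monsum_dp_dx: "monsum (dp_dx g) v t x = (dx ^^ g) v t x"
  by (simp_all add: monsum_def dp_coeff_def dp_dx_def)

lemma dpoly_fun_monsum: "admissible_dpoly X \<Longrightarrow> dpoly_fun (monsum X v)"
  by (auto simp: dpoly_fun_def monsum_eq_eval_dpoly intro: admissible_dpoly_x_words)

lemma dx_monsum:
  assumes "admissible_dpoly X" "(t, x) \<in> \<Omega>"
  shows "dx (monsum X v) t x = monsum (dx_dpoly X) v t x"
proof -
  have "(slice False (eval_dpoly (x_words X)) t x has_field_derivative
      eval_dpoly (partial_dpoly False (x_words X)) t x) (at (coord False t x))"
    by (rule eval_dpoly_has_derivative[OF assms(2) admissible_dpoly_x_words[OF assms(1)]])
  then show ?thesis
    by (simp add: monsum_eq_eval_dpoly[abs_def] x_words_dx_dpoly partial_eq_deriv_slice[of False, simplified]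
        DERIV_imp_deriv)
qed

lemma vk_eq_monsum: "(t, x) \<in> \<Omega> \<Longrightarrow> vk \<alpha> v j t x = monsum (vk_dpoly \<alpha> j) v t x"
proof (induction j arbitrary: t x)
  case 0
  then show ?case by (simp add: vk_def monsum_def)
next
  case (Suc j)
  have "dx (vk \<alpha> v j) t x = dx (monsum (vk_dpoly \<alpha> j) v) t x"
    by (rule dx_cong[OF open_\<Omega> Suc.IH Suc.prems])
  then show ?case
    using dx_monsum[OF admissible_dpoly_vk_dpoly Suc.prems]
    by (simp add: vk_Suc monsum_mult monsum_dp_coeff)
qed

lemma dpoly_fun_vk: "dpoly_fun (vk \<alpha> v j)"
  using dpoly_fun_cong[OF dpoly_fun_monsum[OF admissible_dpoly_vk_dpoly] vk_eq_monsum[symmetric]] .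

lemma dx_vk_eq_monsum:
  assumes "(t, x) \<in> \<Omega>"
  shows "dx (vk \<alpha> v j) t x = monsum (dx_dpoly (vk_dpoly \<alpha> j)) v t x"
proof -
  have "dx (vk \<alpha> v j) t x = dx (monsum (vk_dpoly \<alpha> j) v) t x"
    by (rule dx_cong[OF open_\<Omega> vk_eq_monsum assms])
  also have "\<dots> = monsum (dx_dpoly (vk_dpoly \<alpha> j)) v t x"
    by (rule dx_monsum[OF admissible_dpoly_vk_dpoly assms])
  finally show ?thesis .
qed

definition alpha_dx :: "(real \<Rightarrow> real \<Rightarrow> real) \<Rightarrow> real \<Rightarrow> real \<Rightarrow> real" where
  "alpha_dx w = (\<lambda>t x. \<alpha> (v t x) * dx w t x)"

lemma Lop_eq: "Lop \<alpha> a v w = (\<lambda>t x. dt w t x + a (v t x) * dx w t x + dx (alpha_dx (alpha_dx w)) t x)"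
  by (simp add: Lop_def alpha_dx_def)

lemma vk_Suc_alpha_dx: "vk \<alpha> v (Suc k) = alpha_dx (vk \<alpha> v k)"
  by (simp add: vk_Suc alpha_dx_def)

lemma vk_1: "vk \<alpha> v 1 = alpha_dx v"
  and vk_2: "vk \<alpha> v 2 = alpha_dx (alpha_dx v)"
  by (simp_all add: vk_def alpha_dx_def numeral_2_eq_2)

lemma dpoly_fun_alpha_dx: "dpoly_fun w \<Longrightarrow> dpoly_fun (alpha_dx w)"
  unfolding alpha_dx_def by (intro dpoly_fun_mult dpoly_fun_comp admissible_\<alpha> dpoly_fun_dx)

lemma dx_alpha_dx:
  "dpoly_fun w \<Longrightarrow> (t, x) \<in> \<Omega> \<Longrightarrow>
    dx (alpha_dx w) t x = deriv \<alpha> (v t x) * dx v t x * dx w t x + \<alpha> (v t x) * dx (dx w) t x"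
  unfolding alpha_dx_def
  by (simp add: dx_mult[OF dpoly_fun_comp[OF admissible_\<alpha>] dpoly_fun_dx] dx_comp[OF admissible_\<alpha>])

lemma dx_dx_alpha_dx:
  assumes w: "dpoly_fun w" and p: "(t, x) \<in> \<Omega>"
  shows "dx (dx (alpha_dx w)) t x
    = (deriv (deriv \<alpha>) (v t x) * (dx v t x)\<^sup>2 + deriv \<alpha> (v t x) * dx (dx v) t x) * dx w t x
      + 2 * deriv \<alpha> (v t x) * dx v t x * dx (dx w) t x + \<alpha> (v t x) * dx (dx (dx w)) t x"
proof -
  have "dx (dx (alpha_dx w)) t x
      = dx (\<lambda>t x. deriv \<alpha> (v t x) * dx v t x * dx w t x + \<alpha> (v t x) * dx (dx w) t x) t x"
    by (rule dx_cong[OF open_\<Omega> dx_alpha_dx[OF w] p])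
  then show ?thesis
    using w p
    by (simp add: dx_add dx_mult dx_comp dpoly_fun_add dpoly_fun_mult dpoly_fun_comp dpoly_fun_dx
        dpoly_fun_v admissible_\<alpha> admissible_deriv_\<alpha> power2_eq_square algebra_simps)
qed

lemma dt_alpha_dx:
  "dpoly_fun w \<Longrightarrow> (t, x) \<in> \<Omega> \<Longrightarrow>
    dt (alpha_dx w) t x = deriv \<alpha> (v t x) * dt v t x * dx w t x + \<alpha> (v t x) * dx (dt w) t x"
  unfolding alpha_dx_def
  using smooth2_on_dt_dx_commute[OF dpoly_fun_smooth2_on open_\<Omega>]
  by (simp add: dt_mult[OF dpoly_fun_comp[OF admissible_\<alpha>] dpoly_fun_dx] dt_comp[OF admissible_\<alpha>])

(* The factor \<rho> in L v\<^sub>k\<^sub>+\<^sub>1 = ... + \<alpha>(v) \<partial>\<^sub>x h + \<rho> \<partial>\<^sub>x v\<^sub>k (see vk_equation_Suc); its terms have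
   weight 1 and 3 (remainder_dpoly_1 and remainder_dpoly_3). *)
definition step_remainder :: "real \<Rightarrow> (real \<Rightarrow> real) \<Rightarrow> (real \<Rightarrow> real) \<Rightarrow> real \<Rightarrow> real \<Rightarrow> real" where
  "step_remainder c A B t x =
       \<alpha> (v t x) * (deriv A (v t x) * dx v t x * (vk \<alpha> v 1 t x)\<^sup>2
                   + 2 * A (v t x) * vk \<alpha> v 1 t x * dx (vk \<alpha> v 1) t x
                   + deriv B (v t x) * dx v t x * vk \<alpha> v 2 t x + B (v t x) * dx (vk \<alpha> v 2) t x)
     - deriv a (v t x) * \<alpha> (v t x) * dx v t x - deriv \<alpha> (v t x) * dx (vk \<alpha> v 2) t x
     + (deriv \<alpha> (v t x))^3 * (dx v t x)^3
     - c * \<alpha> (v t x) * deriv \<alpha> (v t x) * dx v t x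
         * (deriv (deriv \<alpha>) (v t x) * (dx v t x)\<^sup>2 + deriv \<alpha> (v t x) * dx (dx v) t x)
     - (next_A c A (v t x) * (vk \<alpha> v 1 t x)\<^sup>2 + next_B c B (v t x) * vk \<alpha> v 2 t x)
         * deriv \<alpha> (v t x) * dx v t x"

lemma monsum_remainder_dpoly_1:
  "monsum remainder_dpoly_1 v t x = - (deriv a (v t x) * \<alpha> (v t x) * dx v t x)"
  by (simp add: remainder_dpoly_1_def monsum_def)

lemma monsum_remainder:
  assumes "(t, x) \<in> \<Omega>"
  shows "monsum (remainder_dpoly_1 @ remainder_dpoly_3 c A B) v t x = step_remainder c A B t x"
  unfolding remainder_dpoly_3_def step_remainder_def monsum_append monsum_mult monsum_dp_coeff
    monsum_dp_dx vk_eq_monsum[OF assms, symmetric] dx_vk_eq_monsum[OF assms, symmetric]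
  by (simp add: remainder_dpoly_1_def monsum_def power2_eq_square power3_eq_cube numeral_2_eq_2
      algebra_simps)

end

section \<open>The equations for the iterated derivatives\<close>

definition vk_equation ::
    "(real \<Rightarrow> real) \<Rightarrow> (real \<Rightarrow> real) \<Rightarrow> (real \<times> real) set \<Rightarrow> (real \<Rightarrow> real \<Rightarrow> real) \<Rightarrow> nat \<Rightarrow>
     real \<Rightarrow> (real \<Rightarrow> real) \<Rightarrow> (real \<Rightarrow> real) \<Rightarrow> (real \<Rightarrow> real \<Rightarrow> real) \<Rightarrow> bool" where
  "vk_equation \<alpha> a \<Omega> v k c A B h \<longleftrightarrow> (\<forall>(t, x)\<in>\<Omega>.
     Lop \<alpha> a v (vk \<alpha> v k) t x =
       c * deriv \<alpha> (v t x) * vk \<alpha> v 1 t x * dx (dx (vk \<alpha> v k)) t x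
     + (A (v t x) * (vk \<alpha> v 1 t x)\<^sup>2 + B (v t x) * vk \<alpha> v 2 t x) * dx (vk \<alpha> v k) t x
     + h t x)"

locale solution = smooth_field +
  assumes pde: "\<forall>(t, x)\<in>\<Omega>. Lop \<alpha> a v v t x = 0"
begin

(* The time derivative of \<alpha>(v) is eliminated with the equation v\<^sub>t = - a(v) v\<^sub>x - \<partial>\<^sub>x v\<^sub>2. *)
lemma Lop_alpha_dx:
  assumes w: "dpoly_fun w" and p: "(t, x) \<in> \<Omega>"
  shows "Lop \<alpha> a v (alpha_dx w) t x = \<alpha> (v t x) * dx (Lop \<alpha> a v w) t x
     - deriv a (v t x) * \<alpha> (v t x) * dx v t x * dx w t x
     - deriv \<alpha> (v t x) * dx (vk \<alpha> v 2) t x * dx w t x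
     + deriv \<alpha> (v t x) * dx v t x * dx (alpha_dx (alpha_dx w)) t x"
proof -
  have w2: "dpoly_fun (alpha_dx (alpha_dx w))"
    using w by (intro dpoly_fun_alpha_dx)
  have dt_v: "dt v t x = - a (v t x) * dx v t x - dx (vk \<alpha> v 2) t x"
    using pde p by (auto simp: Lop_eq vk_2)
  have "dx (Lop \<alpha> a v w) t x
      = dx (dt w) t x + deriv a (v t x) * dx v t x * dx w t x + a (v t x) * dx (dx w) t x
        + dx (dx (alpha_dx (alpha_dx w))) t x"
    unfolding Lop_eq using w w2 p
    by (simp add: dx_add dx_mult dx_comp dpoly_fun_add dpoly_fun_mult dpoly_fun_comp dpoly_fun_dt
        dpoly_fun_dx admissible_a)
  then show ?thesis
    using dt_alpha_dx[OF w p] dx_alpha_dx[OF w p] dx_alpha_dx[OF w2 p] dt_v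
    by (simp add: Lop_eq algebra_simps)
qed

lemma vk_equation_Suc:
  assumes A: "admissible A" and B: "admissible B" and h: "dpoly_fun h"
    and eq: "vk_equation \<alpha> a \<Omega> v k c A B h"
  shows "vk_equation \<alpha> a \<Omega> v (Suc k) (c + 1) (next_A c A) (next_B c B)
    (\<lambda>t x. \<alpha> (v t x) * dx h t x + step_remainder c A B t x * dx (vk \<alpha> v k) t x)"
  unfolding vk_equation_def
proof clarify
  fix t x assume p: "(t, x) \<in> \<Omega>"
  define w where "w = vk \<alpha> v k"
  have w: "dpoly_fun w" "dpoly_fun (alpha_dx w)"
    by (simp_all add: w_def dpoly_fun_vk dpoly_fun_alpha_dx)
  have v1: "dpoly_fun (vk \<alpha> v 1)" "dpoly_fun (vk \<alpha> v 2)"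
    by (simp_all add: dpoly_fun_vk)
  have "dx (Lop \<alpha> a v w) t x = dx (\<lambda>t x. c * deriv \<alpha> (v t x) * vk \<alpha> v 1 t x * dx (dx w) t x
      + (A (v t x) * (vk \<alpha> v 1 t x * vk \<alpha> v 1 t x) + B (v t x) * vk \<alpha> v 2 t x) * dx w t x + h t x) t x"
    using eq by (intro dx_cong[OF open_\<Omega> _ p]) (auto simp: vk_equation_def w_def power2_eq_square)
  also have "\<dots> = c * (deriv (deriv \<alpha>) (v t x) * dx v t x * vk \<alpha> v 1 t x
        + deriv \<alpha> (v t x) * dx (vk \<alpha> v 1) t x) * dx (dx w) t x
      + c * deriv \<alpha> (v t x) * vk \<alpha> v 1 t x * dx (dx (dx w)) t x
      + (deriv A (v t x) * dx v t x * (vk \<alpha> v 1 t x * vk \<alpha> v 1 t x)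
         + 2 * A (v t x) * vk \<alpha> v 1 t x * dx (vk \<alpha> v 1) t x
         + deriv B (v t x) * dx v t x * vk \<alpha> v 2 t x + B (v t x) * dx (vk \<alpha> v 2) t x) * dx w t x
      + (A (v t x) * (vk \<alpha> v 1 t x * vk \<alpha> v 1 t x) + B (v t x) * vk \<alpha> v 2 t x) * dx (dx w) t x
      + dx h t x"
    using w v1 h p
    by (simp add: dx_add dx_mult dx_comp dx_const dpoly_fun_add dpoly_fun_mult dpoly_fun_comp
        dpoly_fun_const dpoly_fun_dx A B admissible_deriv_\<alpha> admissible_deriv2_\<alpha> algebra_simps)
  finally have dL: "dx (Lop \<alpha> a v w) t x = \<dots>" .
  have v12: "vk \<alpha> v 1 t x = \<alpha> (v t x) * dx v t x" "vk \<alpha> v 2 t x = \<alpha> (v t x) * dx (vk \<alpha> v 1) t x"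
    by (simp_all add: vk_def numeral_2_eq_2)
  have "\<alpha> (v t x) \<noteq> 0"
    using \<alpha>_pos v_in_I p by fastforce
  then show "Lop \<alpha> a v (vk \<alpha> v (Suc k)) t x =
      (c + 1) * deriv \<alpha> (v t x) * vk \<alpha> v 1 t x * dx (dx (vk \<alpha> v (Suc k))) t x
      + (next_A c A (v t x) * (vk \<alpha> v 1 t x)\<^sup>2 + next_B c B (v t x) * vk \<alpha> v 2 t x)
        * dx (vk \<alpha> v (Suc k)) t x
      + (\<alpha> (v t x) * dx h t x + step_remainder c A B t x * dx (vk \<alpha> v k) t x)"
    unfolding vk_Suc_alpha_dx w_def[symmetric] Lop_alpha_dx[OF w(1) p] dL
      dx_alpha_dx[OF w(2) p] dx_dx_alpha_dx[OF w(1) p] dx_alpha_dx[OF w(1) p]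
      step_remainder_def next_A_def next_B_def v12 dx_alpha_dx[OF dpoly_fun_v p, folded vk_1]
    by (simp add: field_simps power2_eq_square power3_eq_cube)
qed

lemma vk_equation_1: "vk_equation \<alpha> a \<Omega> v 1 0 (\<lambda>y. 0) (\<lambda>y. 0) (monsum h1_dpoly v)"
  unfolding vk_equation_def
proof clarify
  fix t x assume p: "(t, x) \<in> \<Omega>"
  have "dx (Lop \<alpha> a v v) t x = dx (\<lambda>t x. 0) t x"
    using pde by (intro dx_cong[OF open_\<Omega> _ p]) auto
  then show "Lop \<alpha> a v (vk \<alpha> v 1) t x = 0 * deriv \<alpha> (v t x) * vk \<alpha> v 1 t x * dx (dx (vk \<alpha> v 1)) t x
      + (0 * (vk \<alpha> v 1 t x)\<^sup>2 + 0 * vk \<alpha> v 2 t x) * dx (vk \<alpha> v 1) t x + monsum h1_dpoly v t x"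
    using Lop_alpha_dx[OF dpoly_fun_v p] unfolding vk_1
    by (simp add: vk_2[symmetric] dx_const h1_dpoly_def monsum_def)
qed

lemma vk_equation_Suc_monsum:
  assumes "admissible A" "admissible B" "admissible_dpoly T"
    and "vk_equation \<alpha> a \<Omega> v k c A B (monsum T v)"
  shows "vk_equation \<alpha> a \<Omega> v (Suc k) (c + 1) (next_A c A) (next_B c B) (monsum (next_h_dpoly c A B T k) v)"
proof -
  have "monsum (next_h_dpoly c A B T k) v t x
      = \<alpha> (v t x) * dx (monsum T v) t x + step_remainder c A B t x * dx (vk \<alpha> v k) t x"
    if "(t, x) \<in> \<Omega>" for t x
    using that
    by (simp add: next_h_dpoly_def monsum_append monsum_mult monsum_dp_coeff dx_monsum[OF assms(3)]
        monsum_remainder[symmetric] dx_vk_eq_monsum)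
  then show ?thesis
    using vk_equation_Suc[OF assms(1,2) dpoly_fun_monsum[OF assms(3)] assms(4)]
    by (auto simp: vk_equation_def)
qed

(* For k = 1 the remainder term -\<alpha>'(v) (\<partial>\<^sub>x v\<^sub>2) (\<partial>\<^sub>x v\<^sub>1) has order 3 > k + 1; since
   v\<^sub>2 = \<alpha>(v) \<partial>\<^sub>x v\<^sub>1, it is moved into the second coefficient as -(\<alpha>'/\<alpha>)(v) v\<^sub>2 \<partial>\<^sub>x v\<^sub>2. *)
lemma vk_equation_2:
  "vk_equation \<alpha> a \<Omega> v 2 1 (next_A 0 (\<lambda>y. 0)) (\<lambda>y. - (deriv \<alpha> y * inverse (\<alpha> y)))
    (monsum h2_dpoly v)"
proof -
  have eq: "vk_equation \<alpha> a \<Omega> v 2 1 (next_A 0 (\<lambda>y. 0)) (next_B 0 (\<lambda>y. 0))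
      (\<lambda>t x. \<alpha> (v t x) * dx (monsum h1_dpoly v) t x
             + step_remainder 0 (\<lambda>y. 0) (\<lambda>y. 0) t x * dx (vk \<alpha> v 1) t x)"
    using vk_equation_Suc[OF admissible.const admissible.const dpoly_fun_monsum vk_equation_1]
      admissible_dpoly_h1_dpoly by (simp add: numeral_2_eq_2)
  show ?thesis
    unfolding vk_equation_def
  proof clarify
    fix t x assume p: "(t, x) \<in> \<Omega>"
    have eq_p: "Lop \<alpha> a v (vk \<alpha> v 2) t x =
        1 * deriv \<alpha> (v t x) * vk \<alpha> v 1 t x * dx (dx (vk \<alpha> v 2)) t x
        + (next_A 0 (\<lambda>y. 0) (v t x) * (vk \<alpha> v 1 t x)\<^sup>2 + next_B 0 (\<lambda>y. 0) (v t x) * vk \<alpha> v 2 t x)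
          * dx (vk \<alpha> v 2) t x
        + (\<alpha> (v t x) * dx (monsum h1_dpoly v) t x
           + step_remainder 0 (\<lambda>y. 0) (\<lambda>y. 0) t x * dx (vk \<alpha> v 1) t x)"
      using eq p unfolding vk_equation_def by blast
    have "monsum h2_dpoly v t x
        = \<alpha> (v t x) * dx (monsum h1_dpoly v) t x
          - deriv a (v t x) * \<alpha> (v t x) * dx v t x * dx (vk \<alpha> v 1) t x"
      using p
      by (simp add: h2_dpoly_def monsum_append monsum_mult monsum_dp_coeff
          dx_monsum[OF admissible_dpoly_h1_dpoly] dx_vk_eq_monsum monsum_remainder_dpoly_1)
    moreover have "vk \<alpha> v 1 t x = \<alpha> (v t x) * dx v t x" "vk \<alpha> v 2 t x = \<alpha> (v t x) * dx (vk \<alpha> v 1) t x"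
      by (simp_all add: vk_def numeral_2_eq_2)
    moreover have "\<alpha> (v t x) \<noteq> 0"
      using \<alpha>_pos v_in_I p by fastforce
    ultimately show "Lop \<alpha> a v (vk \<alpha> v 2) t x =
        1 * deriv \<alpha> (v t x) * vk \<alpha> v 1 t x * dx (dx (vk \<alpha> v 2)) t x
        + (next_A 0 (\<lambda>y. 0) (v t x) * (vk \<alpha> v 1 t x)\<^sup>2
           + - (deriv \<alpha> (v t x) * inverse (\<alpha> (v t x))) * vk \<alpha> v 2 t x) * dx (vk \<alpha> v 2) t x
        + monsum h2_dpoly v t x"
      unfolding eq_p step_remainder_def next_A_def next_B_def
      by (simp add: field_simps power2_eq_square power3_eq_cube)
  qed
qed

end

context pde_coefficients
begin

definition has_vk_equation :: "nat \<Rightarrow> bool" where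
  "has_vk_equation k \<longleftrightarrow> (\<exists>A B ts. admissible A \<and> admissible B \<and> admissible_dpoly ts \<and>
     orders ts \<subseteq> {1..k} \<and> weights ts \<subseteq> {k + 1, k + 3} \<and>
     (\<forall>\<Omega> v. solution I \<alpha> a \<Omega> v \<longrightarrow> vk_equation \<alpha> a \<Omega> v k (real k - 1) A B (monsum ts v)))"

lemma has_vk_equation_1: "has_vk_equation 1"
proof -
  have "orders h1_dpoly \<subseteq> {1..1}" "weights h1_dpoly \<subseteq> {1 + 1, 1 + 3}"
    by (simp_all add: h1_dpoly_def orders_def weights_def)
  moreover have "\<forall>\<Omega> v. solution I \<alpha> a \<Omega> v \<longrightarrow>
      vk_equation \<alpha> a \<Omega> v 1 (real 1 - 1) (\<lambda>y. 0) (\<lambda>y. 0) (monsum h1_dpoly v)"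
    using solution.vk_equation_1 by simp
  ultimately show ?thesis
    unfolding has_vk_equation_def using admissible.const admissible_dpoly_h1_dpoly by blast
qed

lemma has_vk_equation_2: "has_vk_equation 2"
proof -
  have "admissible (next_A 0 (\<lambda>y. 0))" "admissible (\<lambda>y. - (deriv \<alpha> y * inverse (\<alpha> y)))"
    by (intro admissible_next_A admissible_uminus admissible.mult admissible.const admissible_deriv_\<alpha>
        admissible.inverse_\<alpha>)+
  moreover have "\<forall>\<Omega> v. solution I \<alpha> a \<Omega> v \<longrightarrow> vk_equation \<alpha> a \<Omega> v 2 (real 2 - 1)
      (next_A 0 (\<lambda>y. 0)) (\<lambda>y. - (deriv \<alpha> y * inverse (\<alpha> y))) (monsum h2_dpoly v)"
    using solution.vk_equation_2 by simp
  moreover have "weights h2_dpoly \<subseteq> {2 + 1, 2 + 3}"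
    using weights_h2_dpoly by simp
  ultimately show ?thesis
    unfolding has_vk_equation_def using admissible_dpoly_h2_dpoly orders_h2_dpoly by blast
qed

lemma has_vk_equation_Suc:
  assumes "2 \<le> k" "has_vk_equation k"
  shows "has_vk_equation (Suc k)"
proof -
  obtain A B ts where ts: "admissible A" "admissible B" "admissible_dpoly ts"
    "orders ts \<subseteq> {1..k}" "weights ts \<subseteq> {k + 1, k + 3}"
    "\<forall>\<Omega> v. solution I \<alpha> a \<Omega> v \<longrightarrow> vk_equation \<alpha> a \<Omega> v k (real k - 1) A B (monsum ts v)"
    using assms(2) unfolding has_vk_equation_def by blast
  have "\<forall>\<Omega> v. solution I \<alpha> a \<Omega> v \<longrightarrow> vk_equation \<alpha> a \<Omega> v (Suc k) (real (Suc k) - 1)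
      (next_A (real k - 1) A) (next_B (real k - 1) B) (monsum (next_h_dpoly (real k - 1) A B ts k) v)"
    using solution.vk_equation_Suc_monsum[OF _ ts(1-3)] ts(6) by fastforce
  then show ?thesis
    unfolding has_vk_equation_def
    using orders_next_h_dpoly[OF assms(1) ts(4)] weights_next_h_dpoly[OF ts(5)]
      admissible_next_A[OF ts(1)] admissible_next_B[OF ts(2)] admissible_dpoly_next_h_dpoly[OF ts(1-3)]
    by blast
qed

lemma has_vk_equation: "1 \<le> k \<Longrightarrow> has_vk_equation k"
proof (induction k rule: nat_induct_at_least)
  case (Suc k)
  then show ?case
    using has_vk_equation_2 has_vk_equation_Suc by (cases "k = 1") (auto simp: numeral_2_eq_2)
qed (rule has_vk_equation_1)

lemma vk_equation_exists:
  assumes "1 \<le> k"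
  shows "\<exists>A B ts. continuous_on I A \<and> continuous_on I B \<and>
    (\<forall>(\<beta>, gs) \<in> set ts. continuous_on I \<beta> \<and> (\<forall>g\<in>set gs. 1 \<le> g \<and> g \<le> k) \<and>
       (sum_list gs = k + 1 \<or> sum_list gs = k + 3)) \<and>
    (\<forall>\<Omega> v. solution I \<alpha> a \<Omega> v \<longrightarrow> vk_equation \<alpha> a \<Omega> v k (real k - 1) A B (monsum ts v))"
proof -
  obtain A B ts where ts: "admissible A" "admissible B" "admissible_dpoly ts"
    "orders ts \<subseteq> {1..k}" "weights ts \<subseteq> {k + 1, k + 3}"
    "\<forall>\<Omega> v. solution I \<alpha> a \<Omega> v \<longrightarrow> vk_equation \<alpha> a \<Omega> v k (real k - 1) A B (monsum ts v)"
    using has_vk_equation[OF assms] unfolding has_vk_equation_def by blast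
  have "\<forall>(\<beta>, gs) \<in> set ts. continuous_on I \<beta> \<and> (\<forall>g\<in>set gs. 1 \<le> g \<and> g \<le> k) \<and>
      (sum_list gs = k + 1 \<or> sum_list gs = k + 3)"
    using ts(3-5) by (fastforce simp: admissible_dpoly_def orders_def weights_def
        intro: admissible_continuous_on)
  then show ?thesis
    using ts(1,2,6) admissible_continuous_on by blast
qed

end

theorem mainTheorem3:
  fixes I :: "real set" and \<alpha> a :: "real \<Rightarrow> real"
  assumes "open I" and "is_interval I"
    and "smooth_on I \<alpha>" and "smooth_on I a"
    and "\<forall>y\<in>I. \<alpha> y > 0"
  shows "\<forall>k::nat. k \<ge> 1 \<longrightarrow>
    (\<exists>A B :: real \<Rightarrow> real. \<exists>ts :: ((real \<Rightarrow> real) \<times> nat list) list.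
       continuous_on I A \<and> continuous_on I B \<and>
       (\<forall>(\<beta>, gs) \<in> set ts. continuous_on I \<beta> \<and>
            (\<forall>g\<in>set gs. 1 \<le> g \<and> g \<le> k) \<and>
            (sum_list gs = k + 1 \<or> sum_list gs = k + 3)) \<and>
       (\<forall>(\<Omega> :: (real \<times> real) set) (v :: real \<Rightarrow> real \<Rightarrow> real).
          open \<Omega> \<and> smooth2_on \<Omega> v \<and> (\<forall>(t, x)\<in>\<Omega>. v t x \<in> I) \<and>
          (\<forall>(t, x)\<in>\<Omega>. Lop \<alpha> a v v t x = 0) \<longrightarrow>
          (\<forall>(t, x)\<in>\<Omega>.
             Lop \<alpha> a v (vk \<alpha> v k) t x =
               (real k - 1) * deriv \<alpha> (v t x) * vk \<alpha> v 1 t x * dx (dx (vk \<alpha> v k)) t x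
             + (A (v t x) * (vk \<alpha> v 1 t x)\<^sup>2 + B (v t x) * vk \<alpha> v 2 t x) * dx (vk \<alpha> v k) t x
             + monsum ts v t x)))"
proof -
  interpret pde_coefficients I \<alpha> a
    using assms by (simp add: pde_coefficients_def)
  have "solution I \<alpha> a \<Omega> v \<longleftrightarrow> open \<Omega> \<and> smooth2_on \<Omega> v \<and> (\<forall>(t, x)\<in>\<Omega>. v t x \<in> I) \<and>
      (\<forall>(t, x)\<in>\<Omega>. Lop \<alpha> a v v t x = 0)" for \<Omega> v
    by (simp add: solution_def solution_axioms_def smooth_field_def smooth_field_axioms_def
        pde_coefficients_axioms)
  then show ?thesis
    using vk_equation_exists unfolding vk_equation_def by simp
qed

end
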